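(* Fix a BS $j$ and, for each class $l\in\{1,\dots,L\}$, a measurable set $A_l$ of (nonatomic) class-$l$ mobiles associated with BS $j$, of mass $m_{lj}\ge 0$. (1) The power control subproblem of BS $j$ is feasible if and only if $\sum_{l=1}^L m_{lj}\gamma_l<1$. (2) If it is feasible, there exists a unique Pareto efficient power density $p$, given by $p(x)=\frac{\sigma^2}{h_{lj}}\,\frac{\gamma_l}{1-\sum_{l'=1}^L m_{l'j}\gamma_{l'}}$ for all $x\in A_l$, $l=1,\dots,L$.
   Context: Nonatomic uplink model: class-$l$ mobiles all have power gain $h_{lj}>0$ to BS $j$ and common target SINR density $\gamma_l>0$; receiver noise power is $\sigma^2>0$. Masses are measured by Lebesgue measure. A power density is a measurable function $p:\bigcup_l A_l\to(0,\infty)$ (integrable against the gains). The SINR density of $x\in A_l$ is $\frac{h_{lj}p(x)}{\sum_{l'}\int_{A_{l'}}h_{l'j}p(z)\,dz+\sigma^2}$. $p$ is feasible if the SINR density of every $x\in A_l$ is at least $\gamma_l$, for all $l$; the power control subproblem of BS $j$ is feasible if a feasible $p$ exists. A feasible $p$ is Pareto efficient if there is no feasible $q$ with $q\le p$ everywhere and $q<p$ on a set of positive measure. *)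

theory Defs
  imports "HOL-Analysis.Analysis"
begin

text \<open>Classes are 1..L; A l is the
 set of class-l mobiles (points of a Euclidean space, Lebesgue measure); h l = h_{lj} is
 the gain of class l to BS j; gam l = gamma_l; sigma2 = sigma^2.\<close>

definition mobiles :: "nat \<Rightarrow> (nat \<Rightarrow> 'a::euclidean_space set) \<Rightarrow> 'a set" where
  "mobiles L A = (\<Union>l\<in>{1..L}. A l)"

definition power_density :: "nat \<Rightarrow> (nat \<Rightarrow> 'a::euclidean_space set) \<Rightarrow> ('a \<Rightarrow> real) \<Rightarrow> bool" where
  "power_density L A p \<longleftrightarrow>
     (\<forall>l\<in>{1..L}. \<forall>x\<in>A l. 0 < p x) \<and> (\<forall>l\<in>{1..L}. set_integrable lebesgue (A l) p)"

definition interference :: "nat \<Rightarrow> (nat \<Rightarrow> 'a::euclidean_space set) \<Rightarrow> (nat \<Rightarrow> real) \<Rightarrow> ('a \<Rightarrow> real) \<Rightarrow> real" where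
  "interference L A h p = (\<Sum>l'\<in>{1..L}. h l' * (LINT z:A l'|lebesgue. p z))"

definition sinr :: "nat \<Rightarrow> (nat \<Rightarrow> 'a::euclidean_space set) \<Rightarrow> (nat \<Rightarrow> real) \<Rightarrow> real \<Rightarrow> ('a \<Rightarrow> real) \<Rightarrow> nat \<Rightarrow> 'a \<Rightarrow> real" where
  "sinr L A h sigma2 p l x = h l * p x / (interference L A h p + sigma2)"

definition feasible_pd :: "nat \<Rightarrow> (nat \<Rightarrow> 'a::euclidean_space set) \<Rightarrow> (nat \<Rightarrow> real) \<Rightarrow> (nat \<Rightarrow> real) \<Rightarrow> real \<Rightarrow> ('a \<Rightarrow> real) \<Rightarrow> bool" where
  "feasible_pd L A h gam sigma2 p \<longleftrightarrow>
     power_density L A p \<and> (\<forall>l\<in>{1..L}. \<forall>x\<in>A l. sinr L A h sigma2 p l x \<ge> gam l)"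

definition subproblem_feasible :: "nat \<Rightarrow> (nat \<Rightarrow> 'a::euclidean_space set) \<Rightarrow> (nat \<Rightarrow> real) \<Rightarrow> (nat \<Rightarrow> real) \<Rightarrow> real \<Rightarrow> bool" where
  "subproblem_feasible L A h gam sigma2 \<longleftrightarrow> (\<exists>p. feasible_pd L A h gam sigma2 p)"

definition pareto_efficient :: "nat \<Rightarrow> (nat \<Rightarrow> 'a::euclidean_space set) \<Rightarrow> (nat \<Rightarrow> real) \<Rightarrow> (nat \<Rightarrow> real) \<Rightarrow> real \<Rightarrow> ('a \<Rightarrow> real) \<Rightarrow> bool" where
  "pareto_efficient L A h gam sigma2 p \<longleftrightarrow>
     feasible_pd L A h gam sigma2 p \<and>
     \<not> (\<exists>q. feasible_pd L A h gam sigma2 q \<and> (\<forall>x\<in>mobiles L A. q x \<le> p x) \<and>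
            emeasure lebesgue {x\<in>mobiles L A. q x < p x} > 0)"

end

theory Submission
  imports Defs
begin

text \<open>A feasible density p satisfies p x \<ge> gam l (I + sigma2) / h l on A l, where I is
  its total interference. Integrating over A l and summing over the classes gives
  I \<ge> S (I + sigma2) for the load S = \<Sum> m l gam l.
  Since sigma2 > 0 this forces S < 1, and then I \<ge> S sigma2 / (1 - S), so every
  feasible density dominates the class-wise constant density p* of the statement.
  That density meets all constraints with equality, hence it is feasible, and any
  Pareto efficient density can exceed it only on a null set.\<close>

lemma set_integral_const_measure:
  assumes "A \<in> sets M" "emeasure M A = ennreal m" "0 \<le> m"
  shows "set_integrable M A (\<lambda>_. c::real)" and "(LINT x:A|M. c) = m * c"
proof -
  have "measure M A = m"
    using assms(2,3) by (simp add: measure_def)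
  thus "(LINT x:A|M. c) = m * c"
    using set_integral_const[of A M c] assms(1,2) by simp
  show "set_integrable M A (\<lambda>_. c::real)"
    using assms unfolding set_integrable_def by simp
qed

lemma set_integral_ge_measure_mult:
  fixes f :: "'a \<Rightarrow> real"
  assumes "A \<in> sets M" "emeasure M A = ennreal m" "0 \<le> m"
    and "set_integrable M A f" "\<And>x. x \<in> A \<Longrightarrow> c \<le> f x"
  shows "m * c \<le> (LINT x:A|M. f x)"
proof -
  have "(LINT x:A|M. c) \<le> (LINT x:A|M. f x)"
    using set_integral_const_measure(1)[OF assms(1-3)] assms(4,5) by (rule set_integral_mono)
  thus ?thesis
    using set_integral_const_measure(2)[OF assms(1-3)] by simp
qed

lemma disjoint_family_on_SOME_index:
  assumes "disjoint_family_on A I" "i \<in> I" "x \<in> A i"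
  shows "(SOME j. j \<in> I \<and> x \<in> A j) = i"
  using assms unfolding disjoint_family_on_def by (intro some_equality) auto

locale uplink_cell =
  fixes L :: nat and A :: "nat \<Rightarrow> 'a::euclidean_space set"
    and h gam m :: "nat \<Rightarrow> real" and sigma2 :: real
  assumes A_meas: "\<And>l. l \<in> {1..L} \<Longrightarrow> A l \<in> sets lebesgue"
    and A_disj: "disjoint_family_on A {1..L}"
    and mass_nonneg: "\<And>l. l \<in> {1..L} \<Longrightarrow> 0 \<le> m l"
    and mass: "\<And>l. l \<in> {1..L} \<Longrightarrow> emeasure lebesgue (A l) = ennreal (m l)"
    and h_pos: "\<And>l. l \<in> {1..L} \<Longrightarrow> 0 < h l"
    and gam_pos: "\<And>l. l \<in> {1..L} \<Longrightarrow> 0 < gam l"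
    and sigma_pos: "0 < sigma2"
begin

definition load :: real where
  "load = (\<Sum>l\<in>{1..L}. m l * gam l)"

definition target_power :: "nat \<Rightarrow> real" where
  "target_power l = sigma2 / h l * (gam l / (1 - load))"

definition optimal_power :: "'a \<Rightarrow> real" where
  "optimal_power x = target_power (SOME l. l \<in> {1..L} \<and> x \<in> A l)"

lemma optimal_power_eq:
  assumes "l \<in> {1..L}" "x \<in> A l"
  shows "optimal_power x = target_power l"
  unfolding optimal_power_def using disjoint_family_on_SOME_index[OF A_disj assms] by simp

lemma interference_nonneg:
  assumes "power_density L A p"
  shows "0 \<le> interference L A h p"
  unfolding interference_def
proof (intro sum_nonneg)
  fix l assume l: "l \<in> {1..L}"
  have "m l * 0 \<le> (LINT z:A l|lebesgue. p z)"
    using assms l A_meas mass mass_nonneg unfolding power_density_def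
    by (intro set_integral_ge_measure_mult) (auto intro: less_imp_le)
  thus "0 \<le> h l * (LINT z:A l|lebesgue. p z)"
    using h_pos[OF l] by simp
qed

lemma feasible_power_lower_bound:
  assumes p: "feasible_pd L A h gam sigma2 p" and l: "l \<in> {1..L}" and x: "x \<in> A l"
  shows "gam l * (interference L A h p + sigma2) / h l \<le> p x"
proof -
  have K: "0 < interference L A h p + sigma2"
    using interference_nonneg p sigma_pos unfolding feasible_pd_def by fastforce
  have "gam l \<le> h l * p x / (interference L A h p + sigma2)"
    using p l x unfolding feasible_pd_def sinr_def by blast
  hence "gam l * (interference L A h p + sigma2) \<le> h l * p x"
    using K by (simp add: pos_le_divide_eq)
  thus ?thesis
    using h_pos[OF l] by (simp add: pos_divide_le_eq mult.commute)
qed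

lemma feasible_load_interference:
  assumes p: "feasible_pd L A h gam sigma2 p"
  shows "load * (interference L A h p + sigma2) \<le> interference L A h p"
proof -
  let ?K = "interference L A h p + sigma2"
  have "m l * gam l * ?K \<le> h l * (LINT z:A l|lebesgue. p z)" if l: "l \<in> {1..L}" for l
  proof -
    have "m l * (gam l * ?K / h l) \<le> (LINT z:A l|lebesgue. p z)"
      using p l A_meas mass mass_nonneg feasible_power_lower_bound[OF p l]
      unfolding feasible_pd_def power_density_def
      by (intro set_integral_ge_measure_mult) auto
    hence "m l * (gam l * ?K / h l) * h l \<le> (LINT z:A l|lebesgue. p z) * h l"
      using h_pos[OF l] by (intro mult_right_mono) auto
    moreover have "m l * gam l * ?K = m l * (gam l * ?K / h l) * h l"
      using h_pos[OF l] by simp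
    ultimately show ?thesis
      by (simp add: mult.commute)
  qed
  hence "(\<Sum>l\<in>{1..L}. m l * gam l * ?K) \<le> interference L A h p"
    unfolding interference_def by (rule sum_mono)
  thus ?thesis
    unfolding load_def by (simp add: sum_distrib_right)
qed

lemma feasible_imp_load_less_one:
  assumes "feasible_pd L A h gam sigma2 p"
  shows "load < 1"
proof (rule ccontr)
  assume "\<not> load < 1"
  moreover have "0 < interference L A h p + sigma2"
    using interference_nonneg assms sigma_pos unfolding feasible_pd_def by fastforce
  ultimately have "interference L A h p + sigma2 \<le> load * (interference L A h p + sigma2)"
    by (simp add: mult_le_cancel_right1)
  thus False
    using feasible_load_interference[OF assms] sigma_pos by linarith
qed

lemma feasible_ge_target_power:
  assumes p: "feasible_pd L A h gam sigma2 p" and l: "l \<in> {1..L}" and x: "x \<in> A l"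
  shows "target_power l \<le> p x"
proof -
  let ?I = "interference L A h p"
  have S: "load < 1"
    using feasible_imp_load_less_one[OF p] .
  have "load * sigma2 \<le> ?I * (1 - load)"
    using feasible_load_interference[OF p] by (simp add: algebra_simps)
  hence "sigma2 / (1 - load) \<le> ?I + sigma2"
    using S by (simp add: field_simps)
  hence "gam l * (sigma2 / (1 - load)) / h l \<le> gam l * (?I + sigma2) / h l"
    using gam_pos[OF l] h_pos[OF l] by (intro divide_right_mono mult_left_mono) auto
  moreover have "gam l * (sigma2 / (1 - load)) / h l = target_power l"
    unfolding target_power_def by (simp add: mult.commute)
  ultimately show ?thesis
    using feasible_power_lower_bound[OF p l x] by linarith
qed

lemma feasible_ge_optimal_power:
  assumes "feasible_pd L A h gam sigma2 p" "x \<in> mobiles L A"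
  shows "optimal_power x \<le> p x"
  using assms feasible_ge_target_power optimal_power_eq unfolding mobiles_def by fastforce

lemma integral_optimal_power:
  assumes l: "l \<in> {1..L}"
  shows "set_integrable lebesgue (A l) optimal_power"
    and "(LINT x:A l|lebesgue. optimal_power x) = m l * target_power l"
proof -
  note const = set_integral_const_measure[OF A_meas[OF l] mass[OF l] mass_nonneg[OF l],
      of "target_power l"]
  have "set_integrable lebesgue (A l) optimal_power
      \<longleftrightarrow> set_integrable lebesgue (A l) (\<lambda>_. target_power l)"
    by (rule set_integrable_cong) (use optimal_power_eq[OF l] in auto)
  thus "set_integrable lebesgue (A l) optimal_power"
    using const(1) by simp
  have "(LINT x:A l|lebesgue. optimal_power x) = (LINT x:A l|lebesgue. target_power l)"
    by (rule set_lebesgue_integral_cong) (use optimal_power_eq[OF l] A_meas l in auto)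
  thus "(LINT x:A l|lebesgue. optimal_power x) = m l * target_power l"
    using const(2) by simp
qed

lemma interference_optimal_power:
  assumes "load < 1"
  shows "interference L A h optimal_power + sigma2 = sigma2 / (1 - load)"
proof -
  have "interference L A h optimal_power = (\<Sum>l\<in>{1..L}. m l * gam l * (sigma2 / (1 - load)))"
    unfolding interference_def
  proof (rule sum.cong)
    fix l assume l: "l \<in> {1..L}"
    show "h l * (LINT z:A l|lebesgue. optimal_power z) = m l * gam l * (sigma2 / (1 - load))"
      using integral_optimal_power(2)[OF l] h_pos[OF l] by (simp add: target_power_def)
  qed simp
  also have "\<dots> = load * (sigma2 / (1 - load))"
    unfolding load_def by (rule sum_distrib_right[symmetric])
  finally show ?thesis
    using assms by (simp add: field_simps)
qed

lemma optimal_power_feasible: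
  assumes S: "load < 1"
  shows "feasible_pd L A h gam sigma2 optimal_power"
  unfolding feasible_pd_def power_density_def
proof (intro conjI ballI)
  fix l x assume l: "l \<in> {1..L}" and x: "x \<in> A l"
  show "0 < optimal_power x"
    using optimal_power_eq[OF l x] h_pos[OF l] gam_pos[OF l] sigma_pos S
    by (simp add: target_power_def)
  show "gam l \<le> sinr L A h sigma2 optimal_power l x"
    unfolding sinr_def interference_optimal_power[OF S] optimal_power_eq[OF l x] target_power_def
    using h_pos[OF l] S sigma_pos by (simp add: field_simps)
next
  fix l assume "l \<in> {1..L}"
  thus "set_integrable lebesgue (A l) optimal_power"
    by (rule integral_optimal_power)
qed

lemma subproblem_feasible_iff: "subproblem_feasible L A h gam sigma2 \<longleftrightarrow> load < 1"
  using feasible_imp_load_less_one optimal_power_feasible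
  unfolding subproblem_feasible_def by blast

lemma optimal_power_pareto_efficient:
  assumes "load < 1"
  shows "pareto_efficient L A h gam sigma2 optimal_power"
proof -
  have "{x\<in>mobiles L A. p x < optimal_power x} = {}" if "feasible_pd L A h gam sigma2 p" for p
    using feasible_ge_optimal_power[OF that] by force
  thus ?thesis
    using optimal_power_feasible[OF assms] unfolding pareto_efficient_def by (metis emeasure_empty less_irrefl)
qed

lemma pareto_efficient_AE_eq_target_power:
  assumes S: "load < 1" and pe: "pareto_efficient L A h gam sigma2 p"
  shows "AE x in lebesgue. \<forall>l\<in>{1..L}. x \<in> A l \<longrightarrow> p x = target_power l"
proof -
  have p: "feasible_pd L A h gam sigma2 p"
    using pe unfolding pareto_efficient_def by blast
  let ?E = "{x\<in>mobiles L A. optimal_power x < p x}"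
  have "emeasure lebesgue ?E = 0"
    using pe optimal_power_feasible[OF S] feasible_ge_optimal_power[OF p]
    unfolding pareto_efficient_def by (meson not_gr_zero)
  moreover have "?E = (\<Union>l\<in>{1..L}. {x. target_power l < indicator (A l) x *\<^sub>R p x} \<inter> A l)"
    unfolding mobiles_def using optimal_power_eq by auto
  moreover have "{x. target_power l < indicator (A l) x *\<^sub>R p x} \<inter> A l \<in> sets lebesgue"
    if l: "l \<in> {1..L}" for l
  proof -
    \<comment> \<open>p itself need not be measurable: only its restrictions to the classes are.\<close>
    have "(\<lambda>x. indicator (A l) x *\<^sub>R p x) \<in> borel_measurable lebesgue"
      using p l unfolding feasible_pd_def power_density_def set_integrable_def by blast
    hence "{x \<in> space lebesgue. target_power l < indicator (A l) x *\<^sub>R p x} \<in> sets lebesgue"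
      by measurable
    thus ?thesis
      using A_meas[OF l] by auto
  qed
  ultimately have "?E \<in> null_sets lebesgue"
    by (auto simp: null_sets_def)
  thus ?thesis
    by (rule AE_I')
      (use feasible_ge_optimal_power[OF p] optimal_power_eq in \<open>force simp: mobiles_def\<close>)
qed

end

theorem proposition7:
  fixes L :: nat and A :: "nat \<Rightarrow> 'a::euclidean_space set"
    and h gam m :: "nat \<Rightarrow> real" and sigma2 :: real
  assumes A_meas: "\<forall>l\<in>{1..L}. A l \<in> sets lebesgue"
    and A_disj: "disjoint_family_on A {1..L}"
    and mass: "\<forall>l\<in>{1..L}. 0 \<le> m l \<and> emeasure lebesgue (A l) = ennreal (m l)"
    and h_pos: "\<forall>l\<in>{1..L}. 0 < h l"
    and gam_pos: "\<forall>l\<in>{1..L}. 0 < gam l"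
    and sigma_pos: "0 < sigma2"
  shows "(subproblem_feasible L A h gam sigma2 \<longleftrightarrow> (\<Sum>l\<in>{1..L}. m l * gam l) < 1)
    \<and> (subproblem_feasible L A h gam sigma2 \<longrightarrow>
        (let pstar = (\<lambda>x. sigma2 / h (SOME l. l \<in> {1..L} \<and> x \<in> A l)
                         * (gam (SOME l. l \<in> {1..L} \<and> x \<in> A l) / (1 - (\<Sum>l'\<in>{1..L}. m l' * gam l'))))
         in pareto_efficient L A h gam sigma2 pstar
            \<and> (\<forall>p. pareto_efficient L A h gam sigma2 p \<longrightarrow>
                 (AE x in lebesgue. \<forall>l\<in>{1..L}. x \<in> A l \<longrightarrow>
                    p x = sigma2 / h l * (gam l / (1 - (\<Sum>l'\<in>{1..L}. m l' * gam l')))))))"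
proof -
  interpret uplink_cell L A h gam m sigma2
    using assms by unfold_locales auto
  have "(\<lambda>x. sigma2 / h (SOME l. l \<in> {1..L} \<and> x \<in> A l)
          * (gam (SOME l. l \<in> {1..L} \<and> x \<in> A l) / (1 - (\<Sum>l'\<in>{1..L}. m l' * gam l'))))
        = optimal_power"
    unfolding optimal_power_def target_power_def load_def ..
  thus ?thesis
    using subproblem_feasible_iff optimal_power_pareto_efficient
      pareto_efficient_AE_eq_target_power
    unfolding Let_def target_power_def load_def by simp
qed

end
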